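(* Let $S$ be a category and $x,y\in S$. Then $\varepsilon_S(x)=\varepsilon_S(y)$ in $\mathrm{U_{mon}}(S)$ if and only if either $x=y$ or both $x$ and $y$ are identities of $S$. In particular, the restriction of $\varepsilon_S$ to every hom-set $S(a,b)$ is one-to-one.
   Context: Categories are arrow-only: a set $S$ with partial associative multiplication, identities $\mathrm{Id}\,S$, source/target identities $\mathrm{s}(x),\mathrm{t}(x)$; $S(a,b)=\{x:\mathrm{s}(x)=a,\mathrm{t}(x)=b\}$. $\mathrm{U_{mon}}(S)$ is the monoid presented by generators $\varepsilon_S(x)$ ($x\in S$) and relations $\varepsilon_S(e)=1$ ($e\in\mathrm{Id}\,S$), $\varepsilon_S(x)\varepsilon_S(y)=\varepsilon_S(xy)$ whenever $xy$ is defined. *)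

theory Defs
  imports Main
begin

text \<open>Arrow-only categories. A category is given by its set of arrows S and a
partial multiplication m (m x y = None means xy is undefined).\<close>

definition is_identity :: "'a set \<Rightarrow> ('a \<Rightarrow> 'a \<Rightarrow> 'a option) \<Rightarrow> 'a \<Rightarrow> bool" where
  "is_identity S m e \<longleftrightarrow> e \<in> S \<and>
     (\<forall>x\<in>S. (m e x \<noteq> None \<longrightarrow> m e x = Some x) \<and> (m x e \<noteq> None \<longrightarrow> m x e = Some x))"

definition category :: "'a set \<Rightarrow> ('a \<Rightarrow> 'a \<Rightarrow> 'a option) \<Rightarrow> bool" where
  "category S m \<longleftrightarrow>
     (\<forall>x y z. m x y = Some z \<longrightarrow> x \<in> S \<and> y \<in> S \<and> z \<in> S) \<and>
     (\<forall>x\<in>S. \<forall>y\<in>S. \<forall>z\<in>S.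
        Option.bind (m x y) (\<lambda>w. m w z) = Option.bind (m y z) (\<lambda>v. m x v)) \<and>
     (\<forall>x\<in>S. \<forall>y\<in>S. \<forall>z\<in>S.
        (Option.bind (m y z) (\<lambda>v. m x v) \<noteq> None) \<longleftrightarrow> (m x y \<noteq> None \<and> m y z \<noteq> None)) \<and>
     (\<forall>x\<in>S. \<exists>e f. is_identity S m e \<and> is_identity S m f \<and> m e x \<noteq> None \<and> m x f \<noteq> None)"

definition src :: "'a set \<Rightarrow> ('a \<Rightarrow> 'a \<Rightarrow> 'a option) \<Rightarrow> 'a \<Rightarrow> 'a" where
  "src S m x = (THE e. is_identity S m e \<and> m e x \<noteq> None)"

definition tgt :: "'a set \<Rightarrow> ('a \<Rightarrow> 'a \<Rightarrow> 'a option) \<Rightarrow> 'a \<Rightarrow> 'a" where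
  "tgt S m x = (THE f. is_identity S m f \<and> m x f \<noteq> None)"

definition hom :: "'a set \<Rightarrow> ('a \<Rightarrow> 'a \<Rightarrow> 'a option) \<Rightarrow> 'a \<Rightarrow> 'a \<Rightarrow> 'a set" where
  "hom S m a b = {x \<in> S. src S m x = a \<and> tgt S m x = b}"

text \<open>U_mon(S) is the free monoid on S (words = lists) modulo the monoid congruence
generated by [e] ~ [] for identities e and [x,y] ~ [xy] whenever xy is defined.
umon_rel S m is that congruence; eps(x) is the class of the word [x].\<close>
inductive umon_rel :: "'a set \<Rightarrow> ('a \<Rightarrow> 'a \<Rightarrow> 'a option) \<Rightarrow> 'a list \<Rightarrow> 'a list \<Rightarrow> bool"
  for S m where
  refl: "umon_rel S m xs xs"
| sym: "umon_rel S m xs ys \<Longrightarrow> umon_rel S m ys xs"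
| trans: "umon_rel S m xs ys \<Longrightarrow> umon_rel S m ys zs \<Longrightarrow> umon_rel S m xs zs"
| compat: "umon_rel S m xs ys \<Longrightarrow> umon_rel S m (us @ xs @ vs) (us @ ys @ vs)"
| ident: "is_identity S m e \<Longrightarrow> umon_rel S m [e] []"
| mult: "x \<in> S \<Longrightarrow> y \<in> S \<Longrightarrow> m x y = Some z \<Longrightarrow> umon_rel S m [x, y] [z]"

definition eps_eq :: "'a set \<Rightarrow> ('a \<Rightarrow> 'a \<Rightarrow> 'a option) \<Rightarrow> 'a \<Rightarrow> 'a \<Rightarrow> bool" where
  "eps_eq S m x y \<longleftrightarrow> umon_rel S m [x] [y]"

end

theory Submission
  imports Defs
begin

text \<open>Reduced words (no identities, no composable adjacent letters) form a set of normal forms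
for \<open>U_mon(S)\<close>: a letter acts on a reduced word by appending it and, if possible, composing it
with the last letter, dropping the result if it is an identity. Associativity of \<open>S\<close> makes this
action respect both kinds of defining relations, so the reduced word obtained from \<open>[x]\<close> --
namely \<open>[x]\<close>, or \<open>[]\<close> if \<open>x\<close> is an identity -- is an invariant of \<open>\<epsilon>(x)\<close>.\<close>

lemma category_closed: "category S m \<Longrightarrow> m a b = Some c \<Longrightarrow> a \<in> S \<and> b \<in> S \<and> c \<in> S"
  unfolding category_def
  by (elim conjE) (drule spec[of _ a], drule spec[of _ b], drule spec[of _ c], simp)

lemma category_assoc:
  "category S m \<Longrightarrow> a \<in> S \<Longrightarrow> b \<in> S \<Longrightarrow> c \<in> S \<Longrightarrow>
   Option.bind (m a b) (\<lambda>w. m w c) = Option.bind (m b c) (\<lambda>v. m a v)"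
  unfolding category_def by (elim conjE) (drule bspec, assumption)+

lemma category_defined_iff:
  "category S m \<Longrightarrow> a \<in> S \<Longrightarrow> b \<in> S \<Longrightarrow> c \<in> S \<Longrightarrow>
   Option.bind (m b c) (\<lambda>v. m a v) \<noteq> None \<longleftrightarrow> m a b \<noteq> None \<and> m b c \<noteq> None"
  unfolding category_def by (elim conjE) (drule bspec, assumption)+

lemma category_undefined_comp:
  assumes "category S m" and "m a b = None" and "m b c = Some d"
  shows "m a d = None"
proof (rule ccontr)
  assume "m a d \<noteq> None"
  then obtain q where "m a d = Some q" by auto
  then have "a \<in> S" using category_closed[OF assms(1)] by blast
  moreover have "b \<in> S" "c \<in> S" using category_closed[OF assms(1,3)] by auto
  ultimately show False
    using category_defined_iff[OF assms(1), of a b c] assms(2,3) \<open>m a d = Some q\<close> by simp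
qed

lemma identity_left: "is_identity S m e \<Longrightarrow> a \<in> S \<Longrightarrow> m e a = Some c \<Longrightarrow> c = a"
  unfolding is_identity_def by auto

lemma identity_right: "is_identity S m e \<Longrightarrow> a \<in> S \<Longrightarrow> m a e = Some c \<Longrightarrow> c = a"
  unfolding is_identity_def by auto

lemma src_identity:
  assumes C: "category S m" and e: "is_identity S m e"
  shows "src S m e = e"
proof -
  have eS: "e \<in> S" using e unfolding is_identity_def by auto
  have unique: "f = e" if f: "is_identity S m f" "m f e \<noteq> None" for f
  proof -
    have "f \<in> S" using f unfolding is_identity_def by auto
    moreover obtain q where "m f e = Some q" using f by auto
    ultimately show ?thesis using identity_left[OF f(1) eS] identity_right[OF e] by metis
  qed
  obtain f where "is_identity S m f" "m f e \<noteq> None"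
    using C eS unfolding category_def by (elim conjE) (drule bspec, assumption, blast)
  then have "is_identity S m e \<and> m e e \<noteq> None" using unique by blast
  then show ?thesis unfolding src_def using unique by (intro the_equality) auto
qed

text \<open>Words are kept reversed: the head of the list is the last letter.\<close>

definition push :: "'a set \<Rightarrow> ('a \<Rightarrow> 'a \<Rightarrow> 'a option) \<Rightarrow> 'a list \<Rightarrow> 'a \<Rightarrow> 'a list" where
  "push S m s x = (if is_identity S m x then s else case s of [] \<Rightarrow> [x]
     | t # s' \<Rightarrow> (case m t x of None \<Rightarrow> x # t # s'
                 | Some w \<Rightarrow> if is_identity S m w then s' else w # s'))"

fun reduced :: "'a set \<Rightarrow> ('a \<Rightarrow> 'a \<Rightarrow> 'a option) \<Rightarrow> 'a list \<Rightarrow> bool" where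
  "reduced S m (a # b # r) \<longleftrightarrow> m b a = None \<and> \<not> is_identity S m a \<and> reduced S m (b # r)"
| "reduced S m [a] \<longleftrightarrow> \<not> is_identity S m a"
| "reduced S m [] \<longleftrightarrow> True"

lemma push_identity: "is_identity S m x \<Longrightarrow> push S m s x = s"
  by (simp add: push_def)

lemma push_Nil: "\<not> is_identity S m x \<Longrightarrow> push S m [] x = [x]"
  by (simp add: push_def)

lemma push_Cons_undefined:
  "\<not> is_identity S m x \<Longrightarrow> m t x = None \<Longrightarrow> push S m (t # s) x = x # t # s"
  by (simp add: push_def)

lemma push_Cons_defined:
  "\<not> is_identity S m x \<Longrightarrow> m t x = Some w \<Longrightarrow>
   push S m (t # s) x = (if is_identity S m w then s else w # s)"
  by (simp add: push_def)

lemmas push_simps = push_identity push_Nil push_Cons_undefined push_Cons_defined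

lemma reduced_tl: "reduced S m (t # s) \<Longrightarrow> reduced S m s"
  by (cases s) auto

lemma reduced_push:
  assumes C: "category S m" and R: "reduced S m s"
  shows "reduced S m (push S m s x)"
proof (cases "is_identity S m x \<or> s = []")
  case True
  then show ?thesis using R by (auto simp: push_def)
next
  case False
  then obtain t s' where s: "s = t # s'" and x: "\<not> is_identity S m x"
    by (cases s) auto
  show ?thesis
  proof (cases "m t x")
    case None
    then show ?thesis using R s x by (simp add: push_simps)
  next
    case (Some w)
    have "reduced S m (w # s')" if "\<not> is_identity S m w"
    proof (cases s')
      case (Cons t' s'')
      then have "m t' w = None"
        using category_undefined_comp[OF C _ Some] R s by simp
      then show ?thesis using that R s Cons by simp
    qed (use that in simp)
    then show ?thesis using R s x Some by (simp add: push_simps reduced_tl)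
  qed
qed

lemma reduced_foldl_push: "category S m \<Longrightarrow> reduced S m s \<Longrightarrow> reduced S m (foldl (push S m) s xs)"
  by (induction xs arbitrary: s) (auto simp: reduced_push)

lemma push_uncomposable:
  "\<not> is_identity S m y \<Longrightarrow> (\<forall>t' s''. s = t' # s'' \<longrightarrow> m t' y = None) \<Longrightarrow> push S m s y = y # s"
  by (cases s) (auto simp: push_simps)

lemma push_comp_Cons_defined:
  assumes C: "category S m" and R: "reduced S m (t # s)"
    and xS: "x \<in> S" and yS: "y \<in> S" and xy: "m x y = Some z"
    and x: "\<not> is_identity S m x" and y: "\<not> is_identity S m y" and tx: "m t x = Some w"
  shows "push S m (push S m (t # s) x) y = push S m (t # s) z"
proof -
  have tS: "t \<in> S" and wS: "w \<in> S" using category_closed[OF C tx] by auto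
  have wy_eq: "m w y = m t z" using category_assoc[OF C tS xS yS] tx xy by simp
  moreover have "m t z \<noteq> None" using category_defined_iff[OF C tS xS yS] tx xy by simp
  ultimately obtain r where tz: "m t z = Some r" and wy: "m w y = Some r" by auto
  have z_identity: "r = t" if "is_identity S m z" using identity_right[OF that tS tz] .
  have t: "\<not> is_identity S m t" using R by (cases s) auto
  show ?thesis
  proof (cases "is_identity S m w")
    case False
    then show ?thesis
      using tx x y tz wy z_identity t by (cases "is_identity S m z") (auto simp: push_simps)
  next
    case w: True
    have ry: "r = y" using identity_left[OF w yS wy] .
    have "m t' y = None" if s: "s = t' # s''" for t' s''
    proof (rule ccontr)
      assume "m t' y \<noteq> None"
      then obtain q where q: "m t' y = Some q" by auto
      have t'S: "t' \<in> S" using category_closed[OF C q] by auto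
      have "m t' w \<noteq> None" using category_defined_iff[OF C t'S wS yS] wy q ry by simp
      then obtain p where "m t' w = Some p" by auto
      moreover have "m t' t = None" using R s by simp
      ultimately show False using category_defined_iff[OF C t'S tS xS] tx by simp
    qed
    then have "push S m s y = y # s" using push_uncomposable[OF y] by blast
    then show ?thesis
      using tx x y tz w ry z_identity by (cases "is_identity S m z") (auto simp: push_simps)
  qed
qed

lemma push_comp:
  assumes C: "category S m" and R: "reduced S m s"
    and xS: "x \<in> S" and yS: "y \<in> S" and xy: "m x y = Some z"
  shows "push S m (push S m s x) y = push S m s z"
proof -
  consider (x) "is_identity S m x" | (y) "is_identity S m y"
    | (Nil) "\<not> is_identity S m x" "\<not> is_identity S m y" "s = []"
    | (undefined) t s' where "\<not> is_identity S m x" "\<not> is_identity S m y" "s = t # s'"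
        "m t x = None"
    | (defined) t s' w where "\<not> is_identity S m x" "\<not> is_identity S m y" "s = t # s'"
        "m t x = Some w"
    by (cases s) fastforce+
  then show ?thesis
  proof cases
    case x
    then show ?thesis using identity_left[OF x yS xy] by (simp add: push_simps)
  next
    case y
    then show ?thesis using identity_right[OF y xS xy] by (simp add: push_simps)
  next
    case Nil
    then show ?thesis using xy by (simp add: push_def)
  next
    case (undefined t s')
    then have "m t z = None" using category_undefined_comp[OF C _ xy] by blast
    then show ?thesis using undefined xy by (simp add: push_def)
  next
    case (defined t s' w)
    then show ?thesis using push_comp_Cons_defined[OF C _ xS yS xy] R by blast
  qed
qed

lemma umon_rel_foldl_push:
  assumes C: "category S m"
  shows "umon_rel S m xs ys \<Longrightarrow> reduced S m s \<Longrightarrow> foldl (push S m) s xs = foldl (push S m) s ys"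
proof (induction xs ys arbitrary: s rule: umon_rel.induct)
  case (compat xs ys us vs)
  then show ?case using reduced_foldl_push[OF C compat.prems] by simp
next
  case (ident e)
  then show ?case by (simp add: push_identity)
next
  case (mult x y z)
  then show ?case using push_comp[OF C] by simp
qed simp_all

lemma eps_eq_iff:
  assumes C: "category S m"
  shows "eps_eq S m x y \<longleftrightarrow> x = y \<or> (is_identity S m x \<and> is_identity S m y)"
proof
  assume "eps_eq S m x y"
  then have "push S m [] x = push S m [] y"
    using umon_rel_foldl_push[OF C] unfolding eps_eq_def by fastforce
  then show "x = y \<or> (is_identity S m x \<and> is_identity S m y)"
    by (auto simp: push_def split: if_splits)
next
  assume "x = y \<or> (is_identity S m x \<and> is_identity S m y)"
  then show "eps_eq S m x y"
    unfolding eps_eq_def by (meson umon_rel.refl umon_rel.ident umon_rel.sym umon_rel.trans)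
qed

lemma eps_eq_hom_imp_eq:
  assumes C: "category S m" and "u \<in> hom S m a b" and "v \<in> hom S m a b" and "eps_eq S m u v"
  shows "u = v"
  using assms src_identity[OF C] unfolding eps_eq_iff[OF C] hom_def by auto

theorem lemma3p10:
  assumes "category S m" and "x \<in> S" and "y \<in> S"
  shows "(eps_eq S m x y \<longleftrightarrow> x = y \<or> (is_identity S m x \<and> is_identity S m y))
         \<and> (\<forall>a b. \<forall>u\<in>hom S m a b. \<forall>v\<in>hom S m a b. eps_eq S m u v \<longrightarrow> u = v)"
  using eps_eq_iff[OF assms(1)] eps_eq_hom_imp_eq[OF assms(1)] by blast

end
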